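(* In the DGL-test-based classification setting described in the context, with $M\ge2$, $n,N\ge1$, $\alpha=N/n$ and $D=\min_{i\neq j}V(P_i,P_j)$, the classification error probability satisfies, for every prior $(\pi_1,\dots,\pi_M)$, $$\Pr[e_{\mathrm{CL}}]\le 2M\exp\!\Big(-n\Big(\frac{\alpha D^2}{2(2+\sqrt\alpha)^2}-\max\Big\{\frac{2\ln(M-1)}{n},\frac{|\mathcal X|\ln 2}{n}\Big\}\Big)\Big).$$
   Context: Setting: $\mathcal X$ is a finite alphabet and $P_1,\dots,P_M$ are (unknown) distributions on $\mathcal X$. For distributions $P,Q$ on $\mathcal X$, $V(P,Q)=\max_{F\subseteq\mathcal X}|P(F)-Q(F)|=\frac12\sum_{a}|P(a)-Q(a)|$. Training sequences $\vec t_i^{\,N}=(t_{i1},\dots,t_{iN})$, $i=1,\dots,M$, are mutually independent, with $\vec t_i^{\,N}$ i.i.d. from $P_i$; $T_i(a)=\frac1N\#\{k:t_{ik}=a\}$ is its empirical distribution, and $T_i(A)=\sum_{a\in A}T_i(a)$. Under hypothesis $\mathcal H_i$, the test sequence $\vec x^{\,n}=(x_1,\dots,x_n)$ is i.i.d. from $P_i$ and independent of the training sequences. Classifier (DGL test with nominal distributions $T_i$): let $\mathcal A=\{A_{k,l}:1\le k<l\le M\}$ with $A_{k,l}=\{a\in\mathcal X: T_k(a)\ge T_l(a)\}$, let $\mu_n(A)=\frac1n\#\{m: x_m\in A\}$, define the score $s_j=\max_{A\in\mathcal A}|T_j(A)-\mu_n(A)|$, and output any index $\hat\imath$ minimizing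 $s_j$ over $j$ (ties broken arbitrarily). Given a prior $\pi_i>0$, $\sum_i\pi_i=1$, the classification error probability is $\Pr[e_{\mathrm{CL}}]=\sum_{i=1}^M\pi_i\Pr[\hat\imath\neq i\mid\mathcal H_i]$, the probability taken over both the test and training sequences. *)

theory Defs
  imports "HOL-Probability.Probability"
begin

text \<open>Indices are 0-based: hypotheses/classes are 0..M-1, positions in sequences
 are 0..N-1 resp. 0..n-1. The alphabet is a finite type 'a.\<close>

definition var_dist :: "'a::finite pmf \<Rightarrow> 'a pmf \<Rightarrow> real" where
  "var_dist P Q = (1/2) * (\<Sum>a\<in>UNIV. \<bar>pmf P a - pmf Q a\<bar>)"

definition emp :: "nat \<Rightarrow> (nat \<Rightarrow> 'a) \<Rightarrow> 'a \<Rightarrow> real" where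
  "emp L s a = real (card {k. k < L \<and> s k = a}) / real L"

definition emp_set :: "nat \<Rightarrow> (nat \<Rightarrow> 'a) \<Rightarrow> 'a set \<Rightarrow> real" where
  "emp_set L s A = real (card {k. k < L \<and> s k \<in> A}) / real L"

text \<open>Training data t: t i is the i-th training sequence (length N).\<close>
definition Aset :: "nat \<Rightarrow> (nat \<Rightarrow> nat \<Rightarrow> 'a) \<Rightarrow> nat \<Rightarrow> nat \<Rightarrow> 'a set" where
  "Aset N t k l = {a. emp N (t k) a \<ge> emp N (t l) a}"

definition Acal :: "nat \<Rightarrow> nat \<Rightarrow> (nat \<Rightarrow> nat \<Rightarrow> 'a) \<Rightarrow> 'a set set" where
  "Acal M N t = {Aset N t k l | k l. k < l \<and> l < M}"

text \<open>Score s_j of class j given training data t and test sequence x of length n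
 (T_j(A) = emp_set N (t j) A, mu_n(A) = emp_set n x A).\<close>
definition score :: "nat \<Rightarrow> nat \<Rightarrow> nat \<Rightarrow> (nat \<Rightarrow> nat \<Rightarrow> 'a) \<Rightarrow> (nat \<Rightarrow> 'a) \<Rightarrow> nat \<Rightarrow> real" where
  "score M N n t x j = Max ((\<lambda>A. \<bar>emp_set N (t j) A - emp_set n x A\<bar>) ` Acal M N t)"

text \<open>A DGL classifier: any decision rule outputting a minimiser of the scores
 (ties broken arbitrarily).\<close>
definition DGL_classifier :: "nat \<Rightarrow> nat \<Rightarrow> nat \<Rightarrow> ((nat \<Rightarrow> nat \<Rightarrow> 'a) \<Rightarrow> (nat \<Rightarrow> 'a) \<Rightarrow> nat) \<Rightarrow> bool" where
  "DGL_classifier M N n dec \<longleftrightarrow>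
     (\<forall>t x. dec t x < M \<and> (\<forall>j<M. score M N n t x (dec t x) \<le> score M N n t x j))"

definition joint_law :: "nat \<Rightarrow> nat \<Rightarrow> nat \<Rightarrow> (nat \<Rightarrow> 'a pmf) \<Rightarrow> nat \<Rightarrow> ((nat \<Rightarrow> nat \<Rightarrow> 'a) \<times> (nat \<Rightarrow> 'a)) pmf" where
  "joint_law M N n P i =
     pair_pmf (Pi_pmf {..<M} undefined (\<lambda>j. Pi_pmf {..<N} undefined (\<lambda>_. P j)))
              (Pi_pmf {..<n} undefined (\<lambda>_. P i))"

definition class_error :: "nat \<Rightarrow> nat \<Rightarrow> nat \<Rightarrow> (nat \<Rightarrow> 'a pmf) \<Rightarrow> (nat \<Rightarrow> real)
    \<Rightarrow> ((nat \<Rightarrow> nat \<Rightarrow> 'a) \<Rightarrow> (nat \<Rightarrow> 'a) \<Rightarrow> nat) \<Rightarrow> real" where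
  "class_error M N n P \<pi> dec =
     (\<Sum>i<M. \<pi> i * measure_pmf.prob (joint_law M N n P i) {(t, x). dec t x \<noteq> i})"

end

theory Submission
  imports Defs
begin

text \<open>Let \<open>B\<close> be the Scheffe set \<open>{P\<^sub>i \<ge> P\<^sub>j}\<close>, so that \<open>V(P\<^sub>i,P\<^sub>j) = P\<^sub>i(B) - P\<^sub>j(B)\<close>.
  Comparing \<open>T\<^sub>i\<close> and \<open>T\<^sub>j\<close> on \<open>B\<close> or its complement, the family \<open>\<A>\<close> contains a set \<open>A\<close>
  with \<open>T\<^sub>i(B) - T\<^sub>j(B) \<le> |T\<^sub>i(A) - T\<^sub>j(A)| \<le> s\<^sub>i + s\<^sub>j\<close>. Hence if a class-\<open>i\<close> test sequence
  is classified as \<open>j\<close> (so \<open>s\<^sub>j \<le> s\<^sub>i\<close>) while all training measures are uniformly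
  within \<open>a\<close> and the test measure within \<open>c\<close> of their laws, then \<open>V(P\<^sub>i,P\<^sub>j) < 4a + 2c\<close>.
  With \<open>4a + 2c = D\<close> a misclassification thus forces a large uniform deviation, which
  Hoeffding's inequality and a union bound over the \<open>2\<^bsup>|\<X>|\<^esup>\<close> subsets of the alphabet
  control; \<open>a\<close> and \<open>c\<close> are balanced so that the exponents \<open>2Na\<^sup>2\<close> and \<open>2nc\<^sup>2\<close> coincide.\<close>

lemma sum_UNIV_eq_sum_Compl:
  fixes f :: "'a::finite \<Rightarrow> 'b::comm_monoid_add"
  shows "sum f UNIV = sum f A + sum f (- A)"
  using sum.Int_Diff[of UNIV f A] by (simp add: Compl_eq_Diff_UNIV)

lemma emp_set_eq_sum:
  fixes s :: "nat \<Rightarrow> 'a::finite"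
  shows "emp_set L s F = (\<Sum>a\<in>F. emp L s a)"
proof -
  have "{k. k < L \<and> s k \<in> F} = (\<Union>a\<in>F. {k. k < L \<and> s k = a})" by auto
  then have "card {k. k < L \<and> s k \<in> F} = (\<Sum>a\<in>F. card {k. k < L \<and> s k = a})"
    by (simp only:) (rule card_UN_disjoint, auto)
  then show ?thesis
    unfolding emp_set_def emp_def by (simp add: sum_divide_distrib)
qed

lemma emp_set_Compl:
  fixes s :: "nat \<Rightarrow> 'a::finite"
  assumes "L > 0"
  shows "emp_set L s (- F) = 1 - emp_set L s F"
proof -
  have "emp_set L s UNIV = emp_set L s F + emp_set L s (- F)"
    unfolding emp_set_eq_sum by (rule sum_UNIV_eq_sum_Compl)
  moreover have "emp_set L s UNIV = 1"
    using assms unfolding emp_set_def by simp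
  ultimately show ?thesis by linarith
qed

lemma sum_diff_le_sum_diff_where_ge:
  fixes f g :: "'a::finite \<Rightarrow> real"
  shows "(\<Sum>a\<in>B. f a - g a) \<le> (\<Sum>a\<in>{a. g a \<le> f a}. f a - g a)"
proof -
  let ?S = "{a. g a \<le> f a}"
  have "(\<Sum>a\<in>B. f a - g a) = (\<Sum>a\<in>B \<inter> ?S. f a - g a) + (\<Sum>a\<in>B - ?S. f a - g a)"
    by (rule sum.Int_Diff) simp
  also have "(\<Sum>a\<in>B - ?S. f a - g a) \<le> 0"
    by (intro sum_nonpos) auto
  also have "(\<Sum>a\<in>B \<inter> ?S. f a - g a) \<le> (\<Sum>a\<in>?S. f a - g a)"
    by (intro sum_mono2) auto
  finally show ?thesis by simp
qed

lemma var_dist_nonneg: "var_dist P Q \<ge> 0"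
  unfolding var_dist_def by (simp add: sum_nonneg)

lemma var_dist_eq_prob_diff:
  fixes P Q :: "'a::finite pmf"
  defines "S \<equiv> {a. pmf Q a \<le> pmf P a}"
  shows "var_dist P Q = measure_pmf.prob P S - measure_pmf.prob Q S"
proof -
  let ?d = "\<lambda>a. pmf P a - pmf Q a"
  have "(\<Sum>a\<in>S. ?d a) + (\<Sum>a\<in>- S. ?d a) = (\<Sum>a\<in>UNIV. ?d a)"
    by (rule sum_UNIV_eq_sum_Compl[symmetric])
  also have "\<dots> = 0"
    by (simp add: sum_subtractf sum_pmf_eq_1)
  finally have total: "(\<Sum>a\<in>S. ?d a) + (\<Sum>a\<in>- S. ?d a) = 0" .
  have "(\<Sum>a\<in>S. \<bar>?d a\<bar>) = (\<Sum>a\<in>S. ?d a)"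
    by (rule sum.cong) (auto simp: S_def)
  moreover have "(\<Sum>a\<in>- S. \<bar>?d a\<bar>) = - (\<Sum>a\<in>- S. ?d a)"
    unfolding sum_negf[symmetric] by (rule sum.cong) (auto simp: S_def)
  moreover have "(\<Sum>a\<in>UNIV. \<bar>?d a\<bar>) = (\<Sum>a\<in>S. \<bar>?d a\<bar>) + (\<Sum>a\<in>- S. \<bar>?d a\<bar>)"
    by (rule sum_UNIV_eq_sum_Compl)
  ultimately have "var_dist P Q = (\<Sum>a\<in>S. ?d a)"
    unfolding var_dist_def using total by simp
  also have "\<dots> = measure_pmf.prob P S - measure_pmf.prob Q S"
    by (simp add: measure_measure_pmf_finite sum_subtractf)
  finally show ?thesis .
qed

lemma finite_Acal: "finite (Acal M N (t :: nat \<Rightarrow> nat \<Rightarrow> 'a::finite))"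
  by (rule finite_subset[of _ UNIV]) auto

lemma abs_emp_set_diff_le_score:
  fixes t :: "nat \<Rightarrow> nat \<Rightarrow> 'a::finite"
  assumes "A \<in> Acal M N t"
  shows "\<bar>emp_set N (t k) A - emp_set n x A\<bar> \<le> score M N n t x k"
  unfolding score_def using assms finite_Acal by (intro Max_ge) auto

lemma score_attained:
  fixes t :: "nat \<Rightarrow> nat \<Rightarrow> 'a::finite"
  assumes "M \<ge> 2"
  obtains A where "A \<in> Acal M N t" "score M N n t x k = \<bar>emp_set N (t k) A - emp_set n x A\<bar>"
proof -
  have "Aset N t 0 1 \<in> Acal M N t"
    unfolding Acal_def using assms by (intro CollectI exI[of _ 0] exI[of _ 1]) auto
  then have "score M N n t x k \<in> (\<lambda>A. \<bar>emp_set N (t k) A - emp_set n x A\<bar>) ` Acal M N t"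
    unfolding score_def using finite_Acal by (intro Max_in) auto
  then show ?thesis using that by blast
qed

lemma Acal_dominates_emp_set_diff:
  fixes t :: "nat \<Rightarrow> nat \<Rightarrow> 'a::finite"
  assumes "N > 0" and "i < M" "j < M" "i \<noteq> j"
  obtains A where "A \<in> Acal M N t"
    "emp_set N (t i) B - emp_set N (t j) B \<le> \<bar>emp_set N (t i) A - emp_set N (t j) A\<bar>"
proof -
  have dominated: "emp_set N (t k) F - emp_set N (t l) F
      \<le> emp_set N (t k) (Aset N t k l) - emp_set N (t l) (Aset N t k l)" for k l F
    unfolding emp_set_eq_sum sum_subtractf[symmetric] Aset_def
    by (rule sum_diff_le_sum_diff_where_ge)
  show ?thesis
  proof (cases "i < j")
    case True
    then have "Aset N t i j \<in> Acal M N t"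
      unfolding Acal_def using assms by (intro CollectI exI[of _ i] exI[of _ j]) auto
    with dominated[where k = i and l = j and F = B] show ?thesis using that by fastforce
  next
    case False
    then have "Aset N t j i \<in> Acal M N t"
      unfolding Acal_def using assms by (intro CollectI exI[of _ j] exI[of _ i]) auto
    moreover have "emp_set N (t i) B - emp_set N (t j) B
        = emp_set N (t j) (- B) - emp_set N (t i) (- B)"
      using emp_set_Compl[OF \<open>N > 0\<close>, of "t i" B] emp_set_Compl[OF \<open>N > 0\<close>, of "t j" B]
      by simp
    ultimately show ?thesis using dominated[where k = j and l = i and F = "- B"] that by fastforce
  qed
qed

lemma var_dist_lt_if_score_le:
  fixes t :: "nat \<Rightarrow> nat \<Rightarrow> 'a::finite" and P :: "nat \<Rightarrow> 'a pmf"
  assumes "M \<ge> 2" "N > 0" "i < M" "j < M" "i \<noteq> j"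
    and "score M N n t x j \<le> score M N n t x i"
    and dev_i: "\<forall>F. \<bar>emp_set N (t i) F - measure_pmf.prob (P i) F\<bar> < a"
    and dev_j: "\<forall>F. \<bar>emp_set N (t j) F - measure_pmf.prob (P j) F\<bar> < a"
    and dev_x: "\<forall>F. \<bar>emp_set n x F - measure_pmf.prob (P i) F\<bar> < c"
  shows "var_dist (P i) (P j) < 4 * a + 2 * c"
proof -
  obtain A\<^sub>i where "A\<^sub>i \<in> Acal M N t"
    and "score M N n t x i = \<bar>emp_set N (t i) A\<^sub>i - emp_set n x A\<^sub>i\<bar>"
    using score_attained[OF \<open>M \<ge> 2\<close>] .
  then have score_i: "score M N n t x i < a + c"
    using dev_i dev_x[rule_format, of A\<^sub>i] by (smt (verit))
  define B where "B = {b. pmf (P j) b \<le> pmf (P i) b}"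
  obtain A where "A \<in> Acal M N t"
    and B_le: "emp_set N (t i) B - emp_set N (t j) B \<le> \<bar>emp_set N (t i) A - emp_set N (t j) A\<bar>"
    using Acal_dominates_emp_set_diff assms(2-5) .
  then have "\<bar>emp_set N (t i) A - emp_set N (t j) A\<bar> \<le> score M N n t x i + score M N n t x j"
    using abs_emp_set_diff_le_score[of A M N t] by (smt (verit))
  moreover have "var_dist (P i) (P j) = measure_pmf.prob (P i) B - measure_pmf.prob (P j) B"
    unfolding B_def by (rule var_dist_eq_prob_diff)
  ultimately show ?thesis
    using B_le score_i \<open>score M N n t x j \<le> score M N n t x i\<close>
      dev_i[rule_format, of B] dev_j[rule_format, of B] by linarith
qed

subsection \<open>Concentration of empirical measures\<close>

lemma map_pmf_indicator_eq_bernoulli: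
  "map_pmf (\<lambda>a. a \<in> F) P = bernoulli_pmf (measure_pmf.prob P F)"
proof (rule pmf_eqI)
  fix b :: bool
  have "(\<lambda>a. a \<in> F) -` {False} = UNIV - F" by auto
  then show "pmf (map_pmf (\<lambda>a. a \<in> F) P) b = pmf (bernoulli_pmf (measure_pmf.prob P F)) b"
    using measure_pmf.prob_compl[of F P] by (cases b) (simp_all add: pmf_map vimage_def)
qed

lemma prob_emp_set_dev_ge:
  assumes "L > 0" and "e \<ge> 0"
  shows "measure_pmf.prob (Pi_pmf {..<L} d (\<lambda>_. P))
           {s. emp_set L s F - measure_pmf.prob P F \<ge> e} \<le> exp (- 2 * real L * e\<^sup>2)"
proof -
  let ?p = "measure_pmf.prob P F"
  let ?count = "\<lambda>s. card {k\<in>{..<L}. s k \<in> F}"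
  have "binomial_pmf L ?p
      = map_pmf (\<lambda>f. card {k\<in>{..<L}. f k}) (Pi_pmf {..<L} (d \<in> F) (\<lambda>_. bernoulli_pmf ?p))"
    by (rule binomial_pmf_altdef') auto
  also have "Pi_pmf {..<L} (d \<in> F) (\<lambda>_. bernoulli_pmf ?p)
      = map_pmf (\<lambda>s. (\<lambda>a. a \<in> F) \<circ> s) (Pi_pmf {..<L} d (\<lambda>_. P))"
    unfolding map_pmf_indicator_eq_bernoulli[symmetric] by (rule Pi_pmf_map) auto
  finally have binomial: "binomial_pmf L ?p = map_pmf ?count (Pi_pmf {..<L} d (\<lambda>_. P))"
    by (simp add: pmf.map_comp o_def)
  have "{s. emp_set L s F - ?p \<ge> e} = ?count -` {k. ?p + e \<le> real k / real L}"
    unfolding emp_set_def by auto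
  then have "measure_pmf.prob (Pi_pmf {..<L} d (\<lambda>_. P)) {s. emp_set L s F - ?p \<ge> e}
      = measure_pmf.prob (binomial_pmf L ?p) {k. ?p + e \<le> real k / real L}"
    by (simp add: binomial)
  also have "\<dots> \<le> exp (real_of_int (- 2 * int L) * e\<^sup>2)"
    by (rule binomial_distribution.prob_ge')
      (use assms in \<open>auto simp: binomial_distribution_def\<close>)
  finally show ?thesis by simp
qed

lemma prob_ex_emp_set_dev_ge:
  fixes P :: "'a::finite pmf"
  assumes "L > 0" and "e \<ge> 0"
  shows "measure_pmf.prob (Pi_pmf {..<L} d (\<lambda>_. P))
           {s. \<exists>F. emp_set L s F - measure_pmf.prob P F \<ge> e}
         \<le> 2 ^ CARD('a) * exp (- 2 * real L * e\<^sup>2)"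
proof -
  let ?Q = "Pi_pmf {..<L} d (\<lambda>_. P)"
  have "{s. \<exists>F. emp_set L s F - measure_pmf.prob P F \<ge> e}
      = (\<Union>F\<in>UNIV. {s. emp_set L s F - measure_pmf.prob P F \<ge> e})" by auto
  then have "measure_pmf.prob ?Q {s. \<exists>F. emp_set L s F - measure_pmf.prob P F \<ge> e}
      \<le> (\<Sum>F\<in>UNIV. measure_pmf.prob ?Q {s. emp_set L s F - measure_pmf.prob P F \<ge> e})"
    by (simp add: measure_pmf.finite_measure_subadditive_finite)
  also have "\<dots> \<le> (\<Sum>F\<in>(UNIV :: 'a set set). exp (- 2 * real L * e\<^sup>2))"
    by (intro sum_mono prob_emp_set_dev_ge assms)
  also have "\<dots> = 2 ^ CARD('a) * exp (- 2 * real L * e\<^sup>2)"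
    by (simp add: card_UNIV_set)
  finally show ?thesis .
qed

lemma abs_emp_set_dev_lt:
  fixes s :: "nat \<Rightarrow> 'a::finite" and Q :: "'a pmf"
  assumes "L > 0" and "\<not> (\<exists>F. emp_set L s F - measure_pmf.prob Q F \<ge> e)"
  shows "\<bar>emp_set L s F - measure_pmf.prob Q F\<bar> < e"
proof -
  have "emp_set L s G - measure_pmf.prob Q G < e" for G
    using assms(2) by (meson not_le)
  from this[of F] this[of "- F"] show ?thesis
    using emp_set_Compl[OF assms(1), of s F] measure_pmf.prob_compl[of F Q]
    by (simp add: Compl_eq_Diff_UNIV abs_less_iff)
qed

subsection \<open>Error probability of the DGL classifier\<close>

lemma map_pmf_training_joint_law:
  assumes "k < M"
  shows "map_pmf (\<lambda>p. fst p k) (joint_law M N n P i) = Pi_pmf {..<N} undefined (\<lambda>_. P k)"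
proof -
  have "map_pmf (\<lambda>p. fst p k) (joint_law M N n P i)
      = map_pmf (\<lambda>t. t k) (map_pmf fst (joint_law M N n P i))"
    by (simp add: pmf.map_comp o_def)
  also have "\<dots> = Pi_pmf {..<N} undefined (\<lambda>_. P k)"
    unfolding joint_law_def map_fst_pair_pmf using assms by (subst Pi_pmf_component) auto
  finally show ?thesis .
qed

lemma map_pmf_test_joint_law:
  "map_pmf snd (joint_law M N n P i) = Pi_pmf {..<n} undefined (\<lambda>_. P i)"
  unfolding joint_law_def map_snd_pair_pmf ..

lemma misclassified_imp_deviation:
  fixes P :: "nat \<Rightarrow> 'a::finite pmf"
  assumes "M \<ge> 2" "N > 0" "n > 0" "i < M" "DGL_classifier M N n dec"
    and D: "\<And>j. j < M \<Longrightarrow> j \<noteq> i \<Longrightarrow> 4 * a + 2 * c \<le> var_dist (P i) (P j)"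
    and "dec t x \<noteq> i"
  shows "(\<exists>k<M. \<exists>F. emp_set N (t k) F - measure_pmf.prob (P k) F \<ge> a)
    \<or> (\<exists>F. emp_set n x F - measure_pmf.prob (P i) F \<ge> c)"
proof (rule ccontr)
  assume "\<not> ?thesis"
  then have good_k: "\<not> (\<exists>F. emp_set N (t k) F - measure_pmf.prob (P k) F \<ge> a)" if "k < M" for k
    using that by auto
  from \<open>\<not> ?thesis\<close> have good: "\<not> (\<exists>F. emp_set n x F - measure_pmf.prob (P i) F \<ge> c)"
    by auto
  let ?j = "dec t x"
  have "?j < M" and score_le: "score M N n t x ?j \<le> score M N n t x i"
    using assms(4,5) unfolding DGL_classifier_def by auto
  have dev_t: "\<forall>F. \<bar>emp_set N (t k) F - measure_pmf.prob (P k) F\<bar> < a" if "k < M" for k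
    using abs_emp_set_dev_lt[OF \<open>N > 0\<close> good_k[OF that]] by blast
  have dev_x: "\<forall>F. \<bar>emp_set n x F - measure_pmf.prob (P i) F\<bar> < c"
    using abs_emp_set_dev_lt[OF \<open>n > 0\<close> good] by blast
  have "var_dist (P i) (P ?j) < 4 * a + 2 * c"
    using var_dist_lt_if_score_le[OF assms(1,2,4) \<open>?j < M\<close> \<open>?j \<noteq> i\<close>[symmetric] score_le
        dev_t[OF assms(4)] dev_t[OF \<open>?j < M\<close>] dev_x] .
  with D[OF \<open>?j < M\<close> \<open>?j \<noteq> i\<close>] show False by linarith
qed

lemma prob_misclassified_le:
  fixes P :: "nat \<Rightarrow> 'a::finite pmf"
  assumes "M \<ge> 2" "N > 0" "n > 0" "i < M" "DGL_classifier M N n dec"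
    and "a \<ge> 0" "c \<ge> 0"
    and "\<And>j. j < M \<Longrightarrow> j \<noteq> i \<Longrightarrow> 4 * a + 2 * c \<le> var_dist (P i) (P j)"
  shows "measure_pmf.prob (joint_law M N n P i) {(t, x). dec t x \<noteq> i}
     \<le> real M * (2 ^ CARD('a) * exp (- 2 * real N * a\<^sup>2)) + 2 ^ CARD('a) * exp (- 2 * real n * c\<^sup>2)"
proof -
  let ?J = "joint_law M N n P i"
  define bad where "bad s L Q e \<longleftrightarrow> (\<exists>F. emp_set L s F - measure_pmf.prob Q F \<ge> e)"
    for s :: "nat \<Rightarrow> 'a" and L Q e
  have training: "measure_pmf.prob ?J {p. bad (fst p k) N (P k) a}
      \<le> 2 ^ CARD('a) * exp (- 2 * real N * a\<^sup>2)" if "k < M" for k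
    using prob_ex_emp_set_dev_ge[OF \<open>N > 0\<close> \<open>a \<ge> 0\<close>, of undefined "P k"]
    by (simp add: bad_def map_pmf_training_joint_law[OF that, where N = N and n = n and i = i, symmetric])
  have test: "measure_pmf.prob ?J {p. bad (snd p) n (P i) c}
      \<le> 2 ^ CARD('a) * exp (- 2 * real n * c\<^sup>2)"
    using prob_ex_emp_set_dev_ge[OF \<open>n > 0\<close> \<open>c \<ge> 0\<close>, of undefined "P i"]
    by (simp add: bad_def map_pmf_test_joint_law[where M = M and N = N, symmetric])
  have "{(t, x). dec t x \<noteq> i}
      \<subseteq> (\<Union>k<M. {p. bad (fst p k) N (P k) a}) \<union> {p. bad (snd p) n (P i) c}"
    using misclassified_imp_deviation[where P = P and a = a and c = c, OF assms(1-5) assms(8)]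
    by (auto simp: bad_def; blast)
  then have "measure_pmf.prob ?J {(t, x). dec t x \<noteq> i}
      \<le> measure_pmf.prob ?J ((\<Union>k<M. {p. bad (fst p k) N (P k) a}) \<union> {p. bad (snd p) n (P i) c})"
    by (rule measure_pmf.finite_measure_mono) simp
  also have "\<dots> \<le> (\<Sum>k<M. measure_pmf.prob ?J {p. bad (fst p k) N (P k) a})
      + measure_pmf.prob ?J {p. bad (snd p) n (P i) c}"
    by (intro order.trans[OF measure_Un_le] add_mono
        measure_pmf.finite_measure_subadditive_finite) auto
  also have "\<dots> \<le> (\<Sum>k<M. 2 ^ CARD('a) * exp (- 2 * real N * a\<^sup>2))
      + 2 ^ CARD('a) * exp (- 2 * real n * c\<^sup>2)"
    by (intro add_mono sum_mono training test) auto
  finally show ?thesis by simp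
qed

lemma prob_misclassified_le_exp:
  fixes P :: "nat \<Rightarrow> 'a::finite pmf"
  assumes "M \<ge> 2" "N > 0" "n > 0" "i < M" "DGL_classifier M N n dec" "D \<ge> 0"
    and "\<And>j. j < M \<Longrightarrow> j \<noteq> i \<Longrightarrow> D \<le> var_dist (P i) (P j)"
  defines "\<alpha> \<equiv> real N / real n"
  shows "measure_pmf.prob (joint_law M N n P i) {(t, x). dec t x \<noteq> i}
     \<le> (real M + 1) * (2 ^ CARD('a) * exp (- real n * (\<alpha> * D\<^sup>2 / (2 * (2 + sqrt \<alpha>)\<^sup>2))))"
proof -
  define r where "r = sqrt \<alpha>"
  have "r > 0" "r\<^sup>2 = \<alpha>" and n\<alpha>: "real n * \<alpha> = real N"
    using assms(2,3) by (auto simp: r_def \<alpha>_def)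
  define a where "a = D / (2 * (2 + r))"
  define c where "c = r * a"
  have "a \<ge> 0" "c \<ge> 0"
    using \<open>D \<ge> 0\<close> \<open>r > 0\<close> by (auto simp: a_def c_def)
  have "4 * a + 2 * c = 2 * (2 + r) * a"
    by (simp add: c_def algebra_simps)
  also have "\<dots> = D"
    using \<open>r > 0\<close> by (simp add: a_def)
  finally have "4 * a + 2 * c = D" .
  moreover have "2 * real N * a\<^sup>2 = real n * (\<alpha> * D\<^sup>2 / (2 * (2 + r)\<^sup>2))"
    unfolding a_def power_divide power_mult_distrib n\<alpha>[symmetric] using \<open>r > 0\<close> by simp
  moreover have "2 * real n * c\<^sup>2 = 2 * real N * a\<^sup>2"
    using \<open>r\<^sup>2 = \<alpha>\<close> by (simp add: c_def power_mult_distrib n\<alpha>[symmetric])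
  ultimately show ?thesis
    using prob_misclassified_le[OF assms(1-5) \<open>a \<ge> 0\<close> \<open>c \<ge> 0\<close>] assms(7)
    by (simp add: r_def algebra_simps)
qed

lemma class_error_le_uniform:
  assumes "\<forall>i<M. \<pi> i > 0" "(\<Sum>i<M. \<pi> i) = 1"
    and "\<And>i. i < M \<Longrightarrow> measure_pmf.prob (joint_law M N n P i) {(t, x). dec t x \<noteq> i} \<le> B"
  shows "class_error M N n P \<pi> dec \<le> B"
proof -
  have "class_error M N n P \<pi> dec \<le> (\<Sum>i<M. \<pi> i * B)"
    unfolding class_error_def using assms by (intro sum_mono mult_left_mono) auto
  also have "\<dots> = B"
    using assms(2) by (simp add: sum_distrib_right[symmetric])
  finally show ?thesis .
qed

lemma two_pow_mult_exp_le:
  assumes "n > 0" and "M \<ge> 2"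
  shows "(real M + 1) * (2 ^ CARD('a) * exp (- real n * E))
    \<le> 2 * real M * exp (- real n * (E - max m (real CARD('a::finite) * ln 2 / real n)))"
proof -
  have two_pow: "exp (real CARD('a) * ln 2) = 2 ^ CARD('a)"
    by (simp add: exp_of_nat_mult)
  have "real CARD('a) * ln 2 \<le> real n * max m (real CARD('a) * ln 2 / real n)"
    using assms(1) by (simp add: max_def field_simps)
  then have "2 ^ CARD('a) * exp (- real n * E)
      \<le> exp (- real n * (E - max m (real CARD('a) * ln 2 / real n)))"
    unfolding two_pow[symmetric] exp_add[symmetric] by (simp add: right_diff_distrib)
  moreover have "real M + 1 \<le> 2 * real M"
    using assms(2) by simp
  ultimately show ?thesis
    by (intro mult_mono) auto
qed

theorem corollary1:
  fixes P :: "nat \<Rightarrow> 'a::finite pmf" and \<pi> :: "nat \<Rightarrow> real"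
    and M N n :: nat
    and dec :: "(nat \<Rightarrow> nat \<Rightarrow> 'a) \<Rightarrow> (nat \<Rightarrow> 'a) \<Rightarrow> nat"
  assumes "M \<ge> 2" and "n \<ge> 1" and "N \<ge> 1"
    and "\<forall>i<M. \<pi> i > 0" and "(\<Sum>i<M. \<pi> i) = 1"
    and "DGL_classifier M N n dec"
  shows "let \<alpha> = real N / real n;
             D = Min {var_dist (P i) (P j) | i j. i < M \<and> j < M \<and> i \<noteq> j}
         in class_error M N n P \<pi> dec
            \<le> 2 * real M * exp (- real n * (\<alpha> * D\<^sup>2 / (2 * (2 + sqrt \<alpha>)\<^sup>2)
                 - max (2 * ln (real M - 1) / real n) (real CARD('a) * ln 2 / real n)))"
proof -
  define S where "S = {var_dist (P i) (P j) | i j. i < M \<and> j < M \<and> i \<noteq> j}"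
  define \<alpha> where "\<alpha> = real N / real n"
  have "finite S"
    unfolding S_def by (rule finite_subset[of _ "(\<lambda>(i, j). var_dist (P i) (P j)) ` ({..<M} \<times> {..<M})"]) auto
  moreover have "var_dist (P 0) (P 1) \<in> S"
    unfolding S_def using assms(1) by force
  ultimately have "Min S \<ge> 0"
    by (subst Min_ge_iff) (auto simp: S_def var_dist_nonneg)
  moreover have "Min S \<le> var_dist (P i) (P j)" if "i < M" "j < M" "i \<noteq> j" for i j
    using \<open>finite S\<close> that by (intro Min_le) (auto simp: S_def)
  ultimately have "class_error M N n P \<pi> dec
      \<le> (real M + 1) * (2 ^ CARD('a) * exp (- real n * (\<alpha> * (Min S)\<^sup>2 / (2 * (2 + sqrt \<alpha>)\<^sup>2))))"
    using assms unfolding \<alpha>_def by (intro class_error_le_uniform prob_misclassified_le_exp) auto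
  also have "\<dots> \<le> 2 * real M * exp (- real n * (\<alpha> * (Min S)\<^sup>2 / (2 * (2 + sqrt \<alpha>)\<^sup>2)
                 - max (2 * ln (real M - 1) / real n) (real CARD('a) * ln 2 / real n)))"
    using assms(1,2) by (intro two_pow_mult_exp_le) auto
  finally show ?thesis
    unfolding S_def \<alpha>_def Let_def .
qed

end
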